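(* Let $d\ge 1$ and $n\ge 1$ be integers, let $\vec\alpha_1,\dots,\vec\alpha_n\in\mathbb{T}^d=\mathbb{R}^d/\mathbb{Z}^d$ (viewed as elements of $[0,1)^d$) be arbitrary, and let $Q$ be the probability measure on $\mathbb{T}^d$ assigning mass $\frac{1}{2n}$ to each of the points $+\vec\alpha_i$ and $-\vec\alpha_i$, $i=1,\dots,n$ (counted with multiplicity), i.e. $Q=\frac{1}{2n}\sum_{i=1}^n(\delta_{\vec\alpha_i}+\delta_{-\vec\alpha_i})$. Then for every positive integer $k$, the $k$-th convolution power $Q^{*k}$ satisfies $$D(Q^{*k})\ \ge\ \frac{1}{\pi^d\, 5^{n+1}\, d^{n/2}}\; k^{-n/2}.$$
   Context: $Q^{*k}$ is the $k$-fold convolution of $Q$ on the additive group $\mathbb{T}^d$; it is the distribution after $k$ steps of the random walk started at $\vec 0$ which at each step picks one of the $\vec\alpha_i$ uniformly at random and adds or subtracts it (each with probability $1/2$), coordinates taken mod 1. Let $U$ denote Haar (uniform Lebesgue) measure on $\mathbb{T}^d$. A box in $\mathbb{T}^d$ is a set of the form $[a_1,b_1)\times\cdots\times[a_d,b_d)$ (sides parallel to the axes, interpreted mod 1). The discrepancy of a probability measure $P$ on $\mathbb{T}^d$ is $D(P)=\sup_{B\text{ box}}|P(B)-U(B)|$. *)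

theory Defs
  imports "HOL-Analysis.Analysis" "HOL-Probability.Probability"
begin

text \<open>Points of the torus T^d = R^d / Z^d are represented by their
  representatives in [0,1)^d; the index type 'd has CARD('d) = d elements.\<close>

definition torus :: "(real ^ 'd) set" where
  "torus = {x. \<forall>j. 0 \<le> x $ j \<and> x $ j < 1}"

definition tmod :: "real ^ 'd \<Rightarrow> real ^ 'd" where
  "tmod x = (\<chi> j. frac (x $ j))"

definition stepQ :: "nat \<Rightarrow> (nat \<Rightarrow> real ^ 'd) \<Rightarrow> (real ^ 'd) pmf" where
  "stepQ n \<alpha> = map_pmf (\<lambda>(i, s). tmod (s *\<^sub>R \<alpha> i))
                       (pmf_of_set ({..<n} \<times> {1, -1 :: real}))"

definition tconv :: "(real ^ 'd) pmf \<Rightarrow> (real ^ 'd) pmf \<Rightarrow> (real ^ 'd) pmf" where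
  "tconv P R = bind_pmf P (\<lambda>x. map_pmf (\<lambda>y. tmod (x + y)) R)"

primrec conv_pow :: "(real ^ 'd) pmf \<Rightarrow> nat \<Rightarrow> (real ^ 'd) pmf" where
  "conv_pow Q 0 = return_pmf 0"
| "conv_pow Q (Suc k) = tconv (conv_pow Q k) Q"

text \<open>Boxes in T^d, sides parallel to the axes, interpreted mod 1: the product
  of arcs [a_j, a_j + L_j) mod 1 with 0 \<le> L_j \<le> 1 (so [a_j,b_j) with b_j = a_j + L_j),
  as subsets of the fundamental domain [0,1)^d.\<close>
definition torus_box :: "real ^ 'd \<Rightarrow> real ^ 'd \<Rightarrow> (real ^ 'd) set" where
  "torus_box a L = {x \<in> torus. \<forall>j. frac (x $ j - a $ j) < L $ j}"

definition torus_boxes :: "((real ^ 'd) set) set" where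
  "torus_boxes = {torus_box a L | a L. \<forall>j. 0 \<le> L $ j \<and> L $ j \<le> 1}"

text \<open>Haar measure on T^d: Lebesgue measure on the fundamental domain [0,1)^d.\<close>
definition haarU :: "(real ^ 'd) set \<Rightarrow> real" where
  "haarU B = measure lborel (B \<inter> torus)"

definition discrepancy :: "(real ^ 'd) pmf \<Rightarrow> real" where
  "discrepancy P = (SUP B \<in> torus_boxes. \<bar>measure_pmf.prob P B - haarU B\<bar>)"

end

theory Submission
  imports Defs
begin

text \<open>After k steps the walk sits at the image mod 1 of \<open>\<Sum>i<n. c i *\<^sub>R \<alpha> i\<close>, where c is
  a simple random walk on the lattice \<open>\<int>\<^sup>n\<close>. Its squared norm has expectation k, so by
  Markov's inequality c lies with probability at least 3/4 in the ball of radius \<open>2 \<surd>k\<close>,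
  which contains at most \<open>(5 \<surd>k)\<^sup>n\<close> lattice points. Hence some lattice point, and so
  some point x of the torus, carries mass at least \<open>(3/4) / (5\<^sup>n k\<^bsup>n/2\<^esup>)\<close>; boxes
  shrinking to x show that the discrepancy is at least this atom. The bound does not depend
  on the \<open>\<alpha> i\<close>, which need not even lie in \<open>[0,1)\<^sup>d\<close>.\<close>

definition lattice_step :: "nat \<Rightarrow> (nat \<times> int) pmf" where
  "lattice_step n = pmf_of_set ({..<n} \<times> {1, -1})"

primrec lattice_walk :: "nat \<Rightarrow> nat \<Rightarrow> (nat \<Rightarrow> int) pmf" where
  "lattice_walk n 0 = return_pmf (\<lambda>_. 0)"
| "lattice_walk n (Suc k) =
     bind_pmf (lattice_walk n k) (\<lambda>c. map_pmf (\<lambda>(i, s). c(i := c i + s)) (lattice_step n))"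

definition torus_point :: "(nat \<Rightarrow> real ^ 'd) \<Rightarrow> nat \<Rightarrow> (nat \<Rightarrow> int) \<Rightarrow> real ^ 'd" where
  "torus_point \<alpha> n c = tmod (\<Sum>i<n. of_int (c i) *\<^sub>R \<alpha> i)"

definition lattice_sqnorm :: "nat \<Rightarrow> (nat \<Rightarrow> int) \<Rightarrow> real" where
  "lattice_sqnorm n c = (\<Sum>i<n. (real_of_int (c i))\<^sup>2)"

lemma set_pmf_lattice_step: "n \<ge> 1 \<Longrightarrow> set_pmf (lattice_step n) = {..<n} \<times> {1, -1}"
  unfolding lattice_step_def by (subst set_pmf_of_set) (auto simp: lessThan_empty_iff)

lemma stepQ_eq_map_lattice_step:
  assumes "n \<ge> 1"
  shows "stepQ n \<alpha> = map_pmf (\<lambda>(i, s). tmod (of_int s *\<^sub>R \<alpha> i)) (lattice_step n)"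
proof -
  let ?g = "\<lambda>(i::nat, s::int). (i, real_of_int s)"
  have inj: "inj_on ?g ({..<n} \<times> {1, -1})" by (auto simp: inj_on_def)
  have img: "?g ` ({..<n} \<times> {1, -1}) = {..<n} \<times> {1, -1::real}" by force
  have "pmf_of_set ({..<n} \<times> {1, -1::real}) = map_pmf ?g (lattice_step n)"
    unfolding lattice_step_def using assms
    by (subst map_pmf_of_set_inj[OF inj]) (auto simp: img lessThan_empty_iff)
  then show ?thesis unfolding stepQ_def by (simp add: map_pmf_comp case_prod_beta')
qed

lemma tmod_add_tmod_left: "tmod (tmod x + y) = tmod (x + y)"
  by (simp add: tmod_def vec_eq_iff)

lemma tmod_add_tmod_right: "tmod (x + tmod y) = tmod (x + y)"
  by (simp add: tmod_def vec_eq_iff)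

lemma tmod_in_torus: "tmod x \<in> torus"
  by (simp add: tmod_def torus_def frac_lt_1)

lemma torus_point_upd:
  assumes "i < n"
  shows "tmod (torus_point \<alpha> n c + tmod (of_int s *\<^sub>R \<alpha> i)) = torus_point \<alpha> n (c(i := c i + s))"
proof -
  have "(\<Sum>j<n. of_int ((c(i := c i + s)) j) *\<^sub>R \<alpha> j)
      = (\<Sum>j<n. of_int (c j) *\<^sub>R \<alpha> j + (if j = i then of_int s *\<^sub>R \<alpha> i else 0))"
    by (rule sum.cong) (auto simp: algebra_simps)
  also have "\<dots> = (\<Sum>j<n. of_int (c j) *\<^sub>R \<alpha> j) + of_int s *\<^sub>R \<alpha> i"
    using assms by (simp add: sum.distrib)
  finally show ?thesis
    unfolding torus_point_def by (simp add: tmod_add_tmod_left tmod_add_tmod_right)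
qed

lemma conv_pow_stepQ_eq_map_lattice_walk:
  assumes "n \<ge> 1"
  shows "conv_pow (stepQ n \<alpha>) k = map_pmf (torus_point \<alpha> n) (lattice_walk n k)"
proof (induction k)
  case 0
  then show ?case by (simp add: torus_point_def tmod_def vec_eq_iff)
next
  case (Suc k)
  then have "conv_pow (stepQ n \<alpha>) (Suc k)
      = tconv (map_pmf (torus_point \<alpha> n) (lattice_walk n k)) (stepQ n \<alpha>)"
    by simp
  also have "\<dots> = map_pmf (torus_point \<alpha> n) (lattice_walk n (Suc k))"
    unfolding tconv_def stepQ_eq_map_lattice_step[OF assms] lattice_walk.simps
    using assms
    by (auto simp: bind_map_pmf map_bind_pmf map_pmf_comp set_pmf_lattice_step torus_point_upd
             intro!: bind_pmf_cong map_pmf_cong)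
  finally show ?case .
qed

lemma set_pmf_lattice_walk:
  assumes "n \<ge> 1"
  shows "set_pmf (lattice_walk n k) \<subseteq> {c. \<forall>i\<ge>n. c i = 0}"
  by (induction k) (use assms in \<open>auto simp: set_pmf_lattice_step\<close>)

lemma lattice_sqnorm_nonneg: "0 \<le> lattice_sqnorm n c"
  unfolding lattice_sqnorm_def by (auto intro: sum_nonneg)

lemma lattice_sqnorm_upd:
  assumes "i < n"
  shows "lattice_sqnorm n (c(i := c i + s))
           = lattice_sqnorm n c + 2 * real_of_int s * real_of_int (c i) + (real_of_int s)\<^sup>2"
proof -
  have "lattice_sqnorm n (c(i := c i + s)) = (\<Sum>j<n. (real_of_int (c j))\<^sup>2 +
      (if j = i then 2 * real_of_int s * real_of_int (c i) + (real_of_int s)\<^sup>2 else 0))"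
    unfolding lattice_sqnorm_def by (rule sum.cong) (auto simp: power2_eq_square algebra_simps)
  also have "\<dots> = lattice_sqnorm n c + 2 * real_of_int s * real_of_int (c i) + (real_of_int s)\<^sup>2"
    using assms by (simp add: sum.distrib lattice_sqnorm_def)
  finally show ?thesis .
qed

text \<open>The cross terms of the steps \<open>+1\<close> and \<open>-1\<close> cancel.\<close>

lemma sum_lattice_sqnorm_step:
  "(\<Sum>(i, s)\<in>{..<n} \<times> {1, -1::int}. lattice_sqnorm n (c(i := c i + s)))
     = 2 * real n * (lattice_sqnorm n c + 1)"
proof -
  have "(\<Sum>(i, s)\<in>{..<n} \<times> {1, -1::int}. lattice_sqnorm n (c(i := c i + s)))
      = (\<Sum>i<n. \<Sum>s\<in>{1, -1::int}. lattice_sqnorm n (c(i := c i + s)))"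
    by (subst sum.cartesian_product) simp
  also have "\<dots> = (\<Sum>i<n. 2 * (lattice_sqnorm n c + 1))"
    by (rule sum.cong) (auto simp: lattice_sqnorm_upd)
  finally show ?thesis by simp
qed

lemma nn_integral_lattice_sqnorm_step:
  assumes "n \<ge> 1"
  shows "(\<integral>\<^sup>+p. ennreal (lattice_sqnorm n (case p of (i, s) \<Rightarrow> c(i := c i + s))) \<partial>lattice_step n)
           = ennreal (lattice_sqnorm n c + 1)"
proof -
  have "(\<integral>\<^sup>+p. ennreal (lattice_sqnorm n (case p of (i, s) \<Rightarrow> c(i := c i + s))) \<partial>lattice_step n)
      = (\<Sum>(i, s)\<in>{..<n} \<times> {1, -1::int}. ennreal (lattice_sqnorm n (c(i := c i + s))))
         / of_nat (card ({..<n} \<times> {1, -1::int}))"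
    unfolding lattice_step_def using assms
    by (subst nn_integral_pmf_of_set) (auto simp: lessThan_empty_iff case_prod_beta')
  also have "\<dots> = ennreal (2 * real n * (lattice_sqnorm n c + 1)) / ennreal (2 * real n)"
    using lattice_sqnorm_nonneg
    by (simp add: case_prod_beta' sum_ennreal sum_lattice_sqnorm_step[unfolded case_prod_beta']
        card_cartesian_product ennreal_of_nat_eq_real_of_nat)
  also have "\<dots> = ennreal (lattice_sqnorm n c + 1)"
    using assms lattice_sqnorm_nonneg by (subst divide_ennreal) (auto intro: add_nonneg_nonneg)
  finally show ?thesis .
qed

lemma nn_integral_lattice_sqnorm_walk:
  assumes "n \<ge> 1"
  shows "(\<integral>\<^sup>+c. ennreal (lattice_sqnorm n c) \<partial>lattice_walk n k) = of_nat k"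
proof (induction k)
  case 0
  then show ?case by (simp add: lattice_sqnorm_def)
next
  case (Suc k)
  have "(\<integral>\<^sup>+c. ennreal (lattice_sqnorm n c) \<partial>lattice_walk n (Suc k))
      = (\<integral>\<^sup>+c. ennreal (lattice_sqnorm n c) + 1 \<partial>lattice_walk n k)"
    using lattice_sqnorm_nonneg
    by (simp add: nn_integral_lattice_sqnorm_step[OF assms] ennreal_plus)
  also have "\<dots> = (\<integral>\<^sup>+c. ennreal (lattice_sqnorm n c) \<partial>lattice_walk n k) + 1"
    by (subst nn_integral_add) (auto simp: measure_pmf.emeasure_space_1)
  finally show ?case using Suc by simp
qed

lemma measure_pmf_Markov_inequality:
  fixes M :: "'a pmf" and f :: "'a \<Rightarrow> real"
  assumes "0 < t" and "0 \<le> m" and "(\<integral>\<^sup>+x. ennreal (f x) \<partial>M) = ennreal m"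
  shows "measure_pmf.prob M {x. t \<le> f x} \<le> m / t"
proof -
  let ?S = "{x. t \<le> f x}"
  have "ennreal t * emeasure M ?S = (\<integral>\<^sup>+x. ennreal t * indicator ?S x \<partial>M)"
    by (simp add: nn_integral_cmult_indicator)
  also have "\<dots> \<le> (\<integral>\<^sup>+x. ennreal (f x) \<partial>M)"
    by (rule nn_integral_mono) (auto simp: indicator_def intro: ennreal_leI)
  finally have "ennreal (t * measure_pmf.prob M ?S) \<le> ennreal m"
    using assms by (simp add: measure_pmf.emeasure_eq_measure ennreal_mult)
  then have "t * measure_pmf.prob M ?S \<le> m"
    using assms(1,2) by (subst (asm) ennreal_le_iff) auto
  then show ?thesis
    using assms(1) by (simp add: field_simps)
qed

lemma lattice_walk_concentrated:
  assumes "n \<ge> 1" "k \<ge> 1"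
  shows "3/4 \<le> measure_pmf.prob (lattice_walk n k) {c. lattice_sqnorm n c < 4 * real k}"
proof -
  let ?W = "lattice_walk n k"
  have "measure_pmf.prob ?W {c. 4 * real k \<le> lattice_sqnorm n c} \<le> real k / (4 * real k)"
    using assms nn_integral_lattice_sqnorm_walk[OF assms(1)]
    by (intro measure_pmf_Markov_inequality) (auto simp: ennreal_of_nat_eq_real_of_nat)
  moreover have "{c. lattice_sqnorm n c < 4 * real k}
      = space (measure_pmf ?W) - {c. 4 * real k \<le> lattice_sqnorm n c}"
    by auto
  ultimately show ?thesis
    using assms measure_pmf.prob_compl[of "{c. 4 * real k \<le> lattice_sqnorm n c}" ?W] by simp
qed

lemma lattice_ball_card:
  fixes r :: real and n :: nat
  assumes "0 \<le> r"
  defines "S \<equiv> {c. (\<forall>i\<ge>n. c i = 0) \<and> lattice_sqnorm n c < r\<^sup>2}"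
  shows "finite S" and "real (card S) \<le> (2 * r + 1) ^ n"
proof -
  define m where "m = \<lfloor>r\<rfloor>"
  define T where "T = (\<lambda>f i. if i < n then f i else 0) ` PiE {..<n} (\<lambda>_. {-m..m})"
  have "S \<subseteq> T"
  proof
    fix c assume c: "c \<in> S"
    have "c i \<in> {-m..m}" if "i < n" for i
    proof -
      have "(real_of_int (c i))\<^sup>2 \<le> lattice_sqnorm n c"
        unfolding lattice_sqnorm_def using that by (intro member_le_sum) auto
      with c have "\<bar>real_of_int (c i)\<bar> < r"
        using assms(1) S_def by (auto intro: power2_less_imp_less[of _ r])
      then have "\<bar>c i\<bar> \<le> m"
        unfolding m_def by (simp add: le_floor_iff)
      then show ?thesis
        by auto
    qed
    moreover have "c = (\<lambda>i. if i < n then restrict c {..<n} i else 0)"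
      using c S_def by (auto simp: fun_eq_iff)
    ultimately show "c \<in> T"
      unfolding T_def by (intro image_eqI[of _ _ "restrict c {..<n}"]) auto
  qed
  moreover have "finite T"
    unfolding T_def by (auto intro!: finite_PiE)
  ultimately show "finite S"
    by (rule finite_subset)
  have "card S \<le> card T"
    using \<open>finite T\<close> \<open>S \<subseteq> T\<close> by (rule card_mono)
  also have "\<dots> \<le> card (PiE {..<n} (\<lambda>_. {-m..m}))"
    unfolding T_def by (rule card_image_le) (auto intro!: finite_PiE)
  also have "\<dots> = nat (2 * m + 1) ^ n"
    by (simp add: card_PiE)
  finally have "real (card S) \<le> real (nat (2 * m + 1)) ^ n"
    by (metis of_nat_le_iff of_nat_power)
  also have "\<dots> \<le> (2 * r + 1) ^ n"
    using assms(1) by (intro power_mono) (auto simp: m_def)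
  finally show "real (card S) \<le> (2 * r + 1) ^ n" .
qed

lemma pmf_ge_measure_div_card:
  fixes M :: "'a pmf"
  assumes "finite A" and "A \<noteq> {}"
  shows "\<exists>x\<in>A. measure_pmf.prob M A / card A \<le> pmf M x"
proof -
  have "Max (pmf M ` A) \<in> pmf M ` A"
    using assms by (intro Max_in) auto
  then obtain x where x: "x \<in> A" "pmf M x = Max (pmf M ` A)"
    by auto
  have "measure_pmf.prob M A = (\<Sum>y\<in>A. pmf M y)"
    using assms(1) by (rule measure_measure_pmf_finite)
  also have "\<dots> \<le> card A * pmf M x"
    using assms(1) x(2) by (intro sum_bounded_above) simp
  finally show ?thesis
    using x(1) assms by (auto simp: field_simps card_gt_0_iff)
qed

lemma lattice_walk_heavy_atom:
  assumes "n \<ge> 1" "k \<ge> 1"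
  shows "\<exists>c. (3/4) / (5 ^ n * real k powr (real n / 2)) \<le> pmf (lattice_walk n k) c"
proof -
  let ?W = "lattice_walk n k"
  define r where "r = 2 * sqrt (real k)"
  define A where "A = {c. (\<forall>i\<ge>n. c i = 0) \<and> lattice_sqnorm n c < r\<^sup>2}"
  have r: "0 \<le> r" "r\<^sup>2 = 4 * real k"
    unfolding r_def by (simp_all add: power_mult_distrib)
  have "{c. lattice_sqnorm n c < 4 * real k} \<inter> set_pmf ?W \<subseteq> A"
    using set_pmf_lattice_walk[OF assms(1), of k] r unfolding A_def by auto
  then have "measure_pmf.prob ?W {c. lattice_sqnorm n c < 4 * real k} \<le> measure_pmf.prob ?W A"
    by (subst measure_Int_set_pmf[symmetric]) (rule measure_pmf.finite_measure_mono, simp_all)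
  with lattice_walk_concentrated[OF assms] have PA: "3/4 \<le> measure_pmf.prob ?W A"
    by linarith
  have "finite A"
    using lattice_ball_card(1)[OF r(1)] unfolding A_def .
  have "real (card A) \<le> (2 * r + 1) ^ n"
    using lattice_ball_card(2)[OF r(1)] unfolding A_def .
  also have "\<dots> \<le> (5 * sqrt (real k)) ^ n"
  proof (rule power_mono)
    show "2 * r + 1 \<le> 5 * sqrt (real k)"
      using assms(2) unfolding r_def by simp
  qed (use r in simp)
  also have "\<dots> = 5 ^ n * real k powr (real n / 2)"
    using assms(2) by (simp add: power_mult_distrib powr_half_sqrt[symmetric] powr_power)
  finally have card_A: "real (card A) \<le> 5 ^ n * real k powr (real n / 2)" .
  have "A \<noteq> {}"
    using PA by auto
  then obtain c where "measure_pmf.prob ?W A / card A \<le> pmf ?W c"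
    using pmf_ge_measure_div_card[OF \<open>finite A\<close>] by blast
  moreover have "(3/4) / (5 ^ n * real k powr (real n / 2)) \<le> measure_pmf.prob ?W A / card A"
    using PA card_A \<open>finite A\<close> \<open>A \<noteq> {}\<close> by (intro frac_le) (auto simp: card_gt_0_iff)
  ultimately show ?thesis
    by (meson order_trans)
qed

lemma pmf_le_pmf_map: "pmf M x \<le> pmf (map_pmf f M) (f x)"
proof -
  have "measure_pmf.prob M {x} \<le> measure_pmf.prob M (f -` {f x})"
    by (intro measure_pmf.finite_measure_mono) auto
  then show ?thesis
    by (simp add: pmf_map measure_pmf_single)
qed

lemma measure_le_measure_cbox:
  fixes S :: "'a::euclidean_space set"
  assumes "S \<subseteq> cbox a b"
  shows "measure lborel S \<le> measure lborel (cbox a b)"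
proof (cases "S \<in> sets lborel")
  case True
  then show ?thesis
    using assms by (intro measure_mono_fmeasurable) auto
qed (simp add: measure_notin_sets)

lemma haarU_le_1: "haarU (B :: (real ^ 'd) set) \<le> 1"
proof -
  have "haarU B \<le> measure lborel (cbox (0::real ^ 'd) 1)"
    unfolding haarU_def
    by (rule measure_le_measure_cbox) (auto simp: torus_def mem_box_cart less_imp_le)
  then show ?thesis
    by (simp add: content_cbox_if_cart split: if_split_asm)
qed

lemma abs_prob_minus_haarU_le_discrepancy:
  fixes P :: "(real ^ 'd) pmf"
  assumes "B \<in> torus_boxes"
  shows "\<bar>measure_pmf.prob P B - haarU B\<bar> \<le> discrepancy P"
  unfolding discrepancy_def
proof (rule cSUP_upper[OF assms])
  have "\<bar>measure_pmf.prob P B' - haarU B'\<bar> \<le> 1" for B' :: "(real ^ 'd) set"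
    using haarU_le_1[of B'] measure_pmf.prob_le_1[of P B'] measure_nonneg[of lborel "B' \<inter> torus"]
      measure_nonneg[of "measure_pmf P" B']
    unfolding haarU_def abs_le_iff by linarith
  then show "bdd_above ((\<lambda>B. \<bar>measure_pmf.prob P B - haarU B\<bar>) ` torus_boxes)"
    by (meson bdd_aboveI2)
qed

text \<open>The cube is kept away from the faces \<open>x $ j = 1\<close> so that it does not wrap around.\<close>

lemma torus_box_cube:
  fixes x :: "real ^ 'd"
  assumes x: "x \<in> torus" and e: "0 < e" "\<And>j. e < 1 - x $ j"
  shows "torus_box x (\<chi> j. e) \<in> torus_boxes" and "x \<in> torus_box x (\<chi> j. e)"
    and "haarU (torus_box x (\<chi> j. e)) \<le> e"
proof -
  have "0 \<le> x $ undefined"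
    using x by (simp add: torus_def)
  with e(2)[of undefined] have "e < 1"
    by linarith
  then show "torus_box x (\<chi> j. e) \<in> torus_boxes"
    unfolding torus_boxes_def using e by (intro CollectI exI[of _ x] exI[of _ "\<chi> j. e"]) auto
  show "x \<in> torus_box x (\<chi> j. e)"
    unfolding torus_box_def using x e by auto
  have "torus_box x (\<chi> j. e) \<inter> torus \<subseteq> cbox x (x + (\<chi> j. e))"
  proof
    fix y assume y: "y \<in> torus_box x (\<chi> j. e) \<inter> torus"
    have "x $ j \<le> y $ j \<and> y $ j \<le> x $ j + e" for j
    proof -
      have bounds: "0 \<le> y $ j" "y $ j < 1" "0 \<le> x $ j" "x $ j < 1"
        using y x by (auto simp: torus_def)
      have frac_lt: "frac (y $ j - x $ j) < e"
        using y by (auto simp: torus_box_def)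
      show ?thesis
      proof (cases "x $ j \<le> y $ j")
        case True
        then have "frac (y $ j - x $ j) = y $ j - x $ j"
          using bounds by (simp add: frac_eq)
        then show ?thesis
          using True frac_lt by simp
      next
        case False
        then have "frac (y $ j - x $ j + 1) = y $ j - x $ j + 1"
          using bounds by (simp add: frac_eq)
        then have "frac (y $ j - x $ j) = y $ j - x $ j + 1"
          by (simp add: frac_1_eq)
        then show ?thesis
          using frac_lt e(2)[of j] bounds by linarith
      qed
    qed
    then show "y \<in> cbox x (x + (\<chi> j. e))"
      by (auto simp: mem_box_cart)
  qed
  then have "haarU (torus_box x (\<chi> j. e)) \<le> measure lborel (cbox x (x + (\<chi> j. e)))"
    unfolding haarU_def by (rule measure_le_measure_cbox)
  also have "\<dots> = e ^ CARD('d)"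
  proof -
    have "x \<in> cbox x (x + (\<chi> j. e))"
      using e(1) by (simp add: mem_box_cart)
    then show ?thesis
      by (subst content_cbox_cart) auto
  qed
  also have "\<dots> \<le> e ^ 1"
    using e(1) \<open>e < 1\<close> by (intro power_decreasing) auto
  finally show "haarU (torus_box x (\<chi> j. e)) \<le> e"
    by simp
qed

lemma pmf_le_discrepancy:
  fixes P :: "(real ^ 'd) pmf"
  assumes x: "x \<in> torus"
  shows "pmf P x \<le> discrepancy P"
proof (rule field_le_epsilon)
  fix e :: real
  assume "0 < e"
  define \<mu> where "\<mu> = Min (range (\<lambda>j. 1 - x $ j))"
  define \<delta> where "\<delta> = min e (\<mu> / 2)"
  have "0 < \<mu>"
    using x by (auto simp: \<mu>_def torus_def)
  then have "0 < \<delta>" "\<delta> \<le> e" "\<delta> \<le> \<mu> / 2"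
    using \<open>0 < e\<close> unfolding \<delta>_def by simp_all
  have "\<delta> < 1 - x $ j" for j
  proof -
    have "\<mu> \<le> 1 - x $ j"
      unfolding \<mu>_def by (rule Min_le) auto
    then show ?thesis
      using \<open>\<delta> \<le> \<mu> / 2\<close> \<open>0 < \<mu>\<close> by linarith
  qed
  let ?B = "torus_box x (\<chi> j. \<delta>)"
  note cube = torus_box_cube[OF x \<open>0 < \<delta>\<close> \<open>\<And>j. \<delta> < 1 - x $ j\<close>]
  have "pmf P x \<le> measure_pmf.prob P ?B"
    using cube(2) measure_pmf.finite_measure_mono[of "{x}" ?B P]
    by (simp add: measure_pmf_single)
  also have "\<dots> \<le> discrepancy P + haarU ?B"
    using abs_prob_minus_haarU_le_discrepancy[OF cube(1), of P] by linarith
  finally show "pmf P x \<le> discrepancy P + e"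
    using cube(3) \<open>\<delta> \<le> e\<close> by linarith
qed

lemma stated_bound_le_atom_bound:
  fixes d n :: nat and k :: real
  assumes "1 \<le> d" and "0 < k"
  shows "1 / (pi ^ d * 5 ^ (n + 1) * real d powr (real n / 2)) * k powr (- (real n / 2))
           \<le> (3/4) / (5 ^ n * k powr (real n / 2))"
proof -
  have "(4/3) * 5 ^ n \<le> (5::real) ^ (n + 1)"
    by simp
  also have "\<dots> \<le> pi ^ d * 5 ^ (n + 1) * real d powr (real n / 2)"
  proof -
    have "1 \<le> pi ^ d"
      using pi_gt3 by (intro one_le_power) linarith
    moreover have "1 \<le> real d powr (real n / 2)"
      using assms(1) by (intro ge_one_powr_ge_zero) auto
    ultimately have "1 \<le> pi ^ d * real d powr (real n / 2)"
      using mult_mono[of 1 "pi ^ d" 1 "real d powr (real n / 2)"] by simp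
    then show ?thesis
      using mult_left_mono[of 1 _ "5 ^ (n + 1)"] by (simp add: algebra_simps)
  qed
  finally have "(4/3) * 5 ^ n * k powr (real n / 2)
      \<le> pi ^ d * 5 ^ (n + 1) * real d powr (real n / 2) * k powr (real n / 2)"
    using assms(2) by (intro mult_right_mono) auto
  then show ?thesis
    using assms(2) by (simp add: powr_minus_divide field_simps)
qed

theorem theorem1:
  fixes \<alpha> :: "nat \<Rightarrow> real ^ 'd" and n k :: nat
  assumes "n \<ge> 1"
    and "\<And>i. i < n \<Longrightarrow> \<alpha> i \<in> torus"
    and "k \<ge> 1"
  shows "discrepancy (conv_pow (stepQ n \<alpha>) k) \<ge>
           1 / (pi ^ CARD('d) * 5 ^ (n + 1) * real CARD('d) powr (real n / 2))
             * real k powr (- (real n / 2))"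
proof -
  obtain c where "(3/4) / (5 ^ n * real k powr (real n / 2)) \<le> pmf (lattice_walk n k) c"
    using lattice_walk_heavy_atom[OF assms(1,3)] by blast
  also have "\<dots> \<le> pmf (conv_pow (stepQ n \<alpha>) k) (torus_point \<alpha> n c)"
    unfolding conv_pow_stepQ_eq_map_lattice_walk[OF assms(1)] by (rule pmf_le_pmf_map)
  also have "\<dots> \<le> discrepancy (conv_pow (stepQ n \<alpha>) k)"
    by (rule pmf_le_discrepancy) (simp add: torus_point_def tmod_in_torus)
  finally show ?thesis
    using stated_bound_le_atom_bound[of "CARD('d)" "real k" n] assms(3) by simp
qed

end
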